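(* For all $n\ge1$, \[ \sum_{\sigma\in\mathcal{R}_{2n}} t^{\mathrm{drop}(\sigma)}=\sum_{j=0}^{\lfloor n/2\rfloor}\gamma_{n,j}\,t^j(1+t)^{n-2j}, \] where $\gamma_{n,j}$ is the number of primary even-odd-drop permutations in $\mathcal{R}_{2n}$ with $j$ drops.
   Context: For $\sigma\in\mathfrak{S}_m$, a drop is a pair $(i,\sigma_i)$ with $i>\sigma_i$; $i$ is the drop top and $\sigma_i$ the drop bottom; $\mathrm{drop}(\sigma)$ is the number of drops. A drop is even-odd if $i$ is even and $\sigma_i$ is odd. $\mathcal{R}_{2n}$ is the set of permutations of $[2n]$ all of whose drops are even-odd. $\sigma\in\mathcal{R}_{2n}$ with drop tops $\{t_1,\dots,t_k\}$ and drop bottoms $\{b_1,\dots,b_k\}$ is a primary even-odd-drop permutation if for all $i,j$, $t_i>b_j$ implies $t_i-b_j\ge3$. *)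

theory Defs
  imports "HOL-Combinatorics.Permutations" "HOL-Computational_Algebra.Polynomial"
begin

definition drops :: "(nat \<Rightarrow> nat) \<Rightarrow> nat \<Rightarrow> (nat \<times> nat) set" where
  "drops \<sigma> m = {(i, \<sigma> i) | i. i \<in> {1..m} \<and> i > \<sigma> i}"

definition dropnum :: "(nat \<Rightarrow> nat) \<Rightarrow> nat \<Rightarrow> nat" where
  "dropnum \<sigma> m = card (drops \<sigma> m)"

definition drop_tops :: "(nat \<Rightarrow> nat) \<Rightarrow> nat \<Rightarrow> nat set" where
  "drop_tops \<sigma> m = {i \<in> {1..m}. i > \<sigma> i}"

definition drop_bottoms :: "(nat \<Rightarrow> nat) \<Rightarrow> nat \<Rightarrow> nat set" where
  "drop_bottoms \<sigma> m = {\<sigma> i | i. i \<in> {1..m} \<and> i > \<sigma> i}"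

(* R_{2n}: permutations of [2n] all of whose drops are even-odd *)
definition R :: "nat \<Rightarrow> (nat \<Rightarrow> nat) set" where
  "R n = {\<sigma>. \<sigma> permutes {1..2*n} \<and>
            (\<forall>i \<in> {1..2*n}. i > \<sigma> i \<longrightarrow> even i \<and> odd (\<sigma> i))}"

definition primary :: "nat \<Rightarrow> (nat \<Rightarrow> nat) \<Rightarrow> bool" where
  "primary n \<sigma> \<longleftrightarrow> \<sigma> \<in> R n \<and>
     (\<forall>t \<in> drop_tops \<sigma> (2*n). \<forall>b \<in> drop_bottoms \<sigma> (2*n). t > b \<longrightarrow> t - b \<ge> 3)"

definition gamma :: "nat \<Rightarrow> nat \<Rightarrow> nat" where
  "gamma n j = card {\<sigma>. primary n \<sigma> \<and> dropnum \<sigma> (2*n) = j}"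

end

theory Submission
  imports Defs
begin

(* Every drop of a permutation in R_{2n} goes from an even top 2k to an odd bottom 2l-1, so the
   permutation determines index sets X, Y \<subseteq> [n] (tops 2k for k \<in> X, bottoms 2k-1 for k \<in> Y)
   with |X| = |Y| = drop; it is primary iff X and Y are disjoint, since an even top and an odd
   bottom are less than 3 apart only if they are 2k and 2k-1.

   The key fact is that adding a common k \<notin> X \<union> Y to both sets does not change the number
   of permutations with prescribed drop tops and bottoms. Composing with the transposition of 2k
   and the position p of the value 2k-1 pins the drop (2k, 2k-1); in the class without k the
   position p ranges over the up-crossings (p < 2k \<le> \<rho> p) of the pinned permutation \<rho>, in the
   class with k over its down-crossings (t \<ge> 2k > \<rho> t), and a permutation has as many of one
   as of the other. Hence the class of (X, Y) has the size of the primary class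
   (X - Z, Y - Z), Z = X \<inter> Y, and summing t^|X| over the free choices of Z \<subseteq> [n] - X - Y
   yields the factor t^j (1 + t)^(n - 2j). *)

lemma drop_tops_iff: "i \<in> drop_tops \<sigma> m \<longleftrightarrow> i \<in> {1..m} \<and> \<sigma> i < i"
  by (simp add: drop_tops_def)

lemma drop_bottoms_eq_image: "drop_bottoms \<sigma> m = \<sigma> ` drop_tops \<sigma> m"
  by (auto simp: drop_bottoms_def drop_tops_def)

lemma dropnum_eq_card_drop_tops: "dropnum \<sigma> m = card (drop_tops \<sigma> m)"
proof -
  have "drops \<sigma> m = (\<lambda>i. (i, \<sigma> i)) ` drop_tops \<sigma> m"
    by (auto simp: drops_def drop_tops_def)
  then show ?thesis
    by (simp add: dropnum_def card_image inj_on_def)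
qed

lemma card_drop_bottoms:
  "\<sigma> permutes S \<Longrightarrow> card (drop_bottoms \<sigma> m) = card (drop_tops \<sigma> m)"
  by (simp add: drop_bottoms_eq_image card_image permutes_inj_on)

lemma drop_tops_swap_remove:
  assumes "\<rho> a < a" "p \<le> \<rho> a" "a \<le> \<rho> p"
  shows "drop_tops (\<rho> \<circ> transpose a p) m = drop_tops \<rho> m - {a}"
  using assms by (auto simp: drop_tops_def transpose_def)

lemma drop_bottoms_swap_remove:
  assumes "\<rho> permutes S" "\<rho> a < a" "p \<le> \<rho> a" "a \<le> \<rho> p"
  shows "drop_bottoms (\<rho> \<circ> transpose a p) m = drop_bottoms \<rho> m - {\<rho> a}"
proof -
  have "a \<notin> drop_tops \<rho> m - {a}" "p \<notin> drop_tops \<rho> m - {a}"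
    using assms(2-4) by (auto simp: drop_tops_def)
  then have "drop_bottoms (\<rho> \<circ> transpose a p) m = \<rho> ` (drop_tops \<rho> m - {a})"
    unfolding drop_bottoms_eq_image drop_tops_swap_remove[OF assms(2-4)] image_comp[symmetric]
    by simp
  also have "\<dots> = drop_bottoms \<rho> m - {\<rho> a}"
    by (simp add: drop_bottoms_eq_image image_set_diff permutes_inj[OF assms(1)])
  finally show ?thesis .
qed

lemma drop_tops_swap_exchange:
  assumes "\<rho> a < a" "\<rho> t < a" "a \<le> t"
  shows "drop_tops (\<rho> \<circ> transpose a t) m = drop_tops \<rho> m"
  using assms by (auto simp: drop_tops_def transpose_def)

lemma drop_bottoms_swap_exchange:
  assumes "\<rho> a < a" "\<rho> t < a" "a \<le> t" "t \<le> m"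
  shows "drop_bottoms (\<rho> \<circ> transpose a t) m = drop_bottoms \<rho> m"
proof -
  have "a \<in> drop_tops \<rho> m" "t \<in> drop_tops \<rho> m"
    using assms by (auto simp: drop_tops_def)
  then show ?thesis
    unfolding drop_bottoms_eq_image drop_tops_swap_exchange[OF assms(1-3)] image_comp[symmetric]
    by simp
qed

lemma permutes_card_exits_eq_card_entries:
  assumes "\<rho> permutes S" "finite S" "L \<subseteq> S"
  shows "card {i\<in>L. \<rho> i \<notin> L} = card {i\<in>S - L. \<rho> i \<in> L}"
proof -
  have fin: "finite L" using assms(2,3) finite_subset by blast
  have "bij_betw \<rho> {i\<in>S. \<rho> i \<in> L} L"
    using assms(3) permutes_image[OF assms(1)]
    by (auto simp: bij_betw_def permutes_inj_on[OF assms(1)])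
  then have "card L = card {i\<in>S. \<rho> i \<in> L}"
    by (simp add: bij_betw_same_card)
  also have "{i\<in>S. \<rho> i \<in> L} = {i\<in>L. \<rho> i \<in> L} \<union> {i\<in>S - L. \<rho> i \<in> L}"
    using assms(3) by blast
  also have "card \<dots> = card {i\<in>L. \<rho> i \<in> L} + card {i\<in>S - L. \<rho> i \<in> L}"
    using assms(2) fin by (intro card_Un_disjoint) auto
  finally have "card L = card {i\<in>L. \<rho> i \<in> L} + card {i\<in>S - L. \<rho> i \<in> L}" .
  moreover have "card L = card {i\<in>L. \<rho> i \<in> L} + card {i\<in>L. \<rho> i \<notin> L}"
    using fin by (subst card_Un_disjoint[symmetric]) (auto intro: arg_cong[where f = card])
  ultimately show ?thesis
    by simp
qed

lemma sum_Pow_power_card: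
  fixes x :: "'a::comm_semiring_1"
  assumes "finite A"
  shows "(\<Sum>Z\<in>Pow A. x ^ card Z) = (1 + x) ^ card A"
  using prod_add[OF assms, of "\<lambda>_. x" "\<lambda>_. 1"] by (simp add: add.commute)

lemma sum_Pow_pairs_by_intersection:
  fixes F :: "'a set \<Rightarrow> 'a set \<Rightarrow> 'b::comm_monoid_add"
  assumes "finite N"
  shows "(\<Sum>(X, Y)\<in>Pow N \<times> Pow N. F X Y) =
    (\<Sum>(X, Y)\<in>{(X, Y)\<in>Pow N \<times> Pow N. X \<inter> Y = {}}. \<Sum>Z\<in>Pow (N - X - Y). F (X \<union> Z) (Y \<union> Z))"
proof -
  let ?D = "{(X, Y)\<in>Pow N \<times> Pow N. X \<inter> Y = {}}"
  have "finite ?D"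
    by (rule finite_subset[of _ "Pow N \<times> Pow N"]) (use assms in auto)
  have "(\<Sum>(X, Y)\<in>Pow N \<times> Pow N. F X Y) =
      (\<Sum>((X, Y), Z)\<in>(SIGMA (X, Y):?D. Pow (N - X - Y)). F (X \<union> Z) (Y \<union> Z))"
    by (rule sum.reindex_bij_witness[symmetric, where j = "\<lambda>((X, Y), Z). (X \<union> Z, Y \<union> Z)"
          and i = "\<lambda>(X, Y). ((X - Y, Y - X), X \<inter> Y)"]) auto
  also have "\<dots> = (\<Sum>(X, Y)\<in>?D. \<Sum>Z\<in>Pow (N - X - Y). F (X \<union> Z) (Y \<union> Z))"
    using \<open>finite ?D\<close> assms unfolding split_def by (subst sum.Sigma) (auto simp: split_def)
  finally show ?thesis .
qed

lemma sum_by_fibres: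
  assumes "finite A" "finite B" "key ` A \<subseteq> B"
  shows "(\<Sum>a\<in>A. f (key a)) = (\<Sum>b\<in>B. of_nat (card {a \<in> A. key a = b}) * f b)"
proof -
  have "(\<Sum>a\<in>{a \<in> A. key a = b}. f (key a)) = (\<Sum>a\<in>{a \<in> A. key a = b}. f b)" for b
    by (rule sum.cong) auto
  then show ?thesis
    using sum.group[OF assms, of "\<lambda>a. f (key a)"] by simp
qed

definition drop_class :: "nat \<Rightarrow> nat set \<Rightarrow> nat set \<Rightarrow> (nat \<Rightarrow> nat) set" where
  "drop_class m T B = {\<sigma>. \<sigma> permutes {1..m} \<and> drop_tops \<sigma> m = T \<and> drop_bottoms \<sigma> m = B}"

lemma finite_drop_class: "finite (drop_class m T B)"
  by (rule finite_subset[OF _ finite_permutations[of "{1..m}"]]) (auto simp: drop_class_def)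

lemma swap_swap_cancel: "\<sigma> \<circ> transpose a p \<circ> transpose a p = \<sigma>"
  by (simp add: comp_assoc)

context
  fixes m a :: nat
  assumes a_range: "a \<in> {2..m}"
begin

definition pinned_class :: "nat set \<Rightarrow> nat set \<Rightarrow> (nat \<Rightarrow> nat) set" where
  "pinned_class T B = {\<rho> \<in> drop_class m (insert a T) (insert (a - 1) B). \<rho> a = a - 1}"

definition up_crossings :: "(nat \<Rightarrow> nat) \<Rightarrow> nat set" where
  "up_crossings \<rho> = {p \<in> {1..m}. p < a \<and> a \<le> \<rho> p}"

definition down_crossings :: "(nat \<Rightarrow> nat) \<Rightarrow> nat set" where
  "down_crossings \<rho> = {t \<in> {1..m}. a \<le> t \<and> \<rho> t < a}"

lemma card_up_crossings_eq_card_down_crossings: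
  assumes perm: "\<rho> permutes {1..m}"
  shows "card (up_crossings \<rho>) = card (down_crossings \<rho>)"
proof -
  have "card {p \<in> {1..<a}. \<rho> p \<notin> {1..<a}} = card {t \<in> {1..m} - {1..<a}. \<rho> t \<in> {1..<a}}"
    using a_range by (intro permutes_card_exits_eq_card_entries[OF perm]) auto
  moreover have "{p \<in> {1..<a}. \<rho> p \<notin> {1..<a}} = up_crossings \<rho>"
    "{t \<in> {1..m} - {1..<a}. \<rho> t \<in> {1..<a}} = down_crossings \<rho>"
    using a_range permutes_in_image[OF perm] by (fastforce simp: up_crossings_def down_crossings_def)+
  ultimately show ?thesis
    by simp
qed

lemma permutes_comp_transpose:
  "\<sigma> permutes {1..m} \<Longrightarrow> p \<in> {1..m} \<Longrightarrow> \<sigma> \<circ> transpose a p permutes {1..m}"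
  using a_range by (intro permutes_compose permutes_swap_id) auto

lemma swap_up_crossing_mem_drop_class:
  assumes "\<rho> \<in> pinned_class T B" "p \<in> up_crossings \<rho>" "a \<notin> T" "a - 1 \<notin> B"
  shows "\<rho> \<circ> transpose a p \<in> drop_class m T B"
proof -
  have perm: "\<rho> permutes {1..m}" and pin: "\<rho> a = a - 1"
    and tops: "drop_tops \<rho> m = insert a T" and bots: "drop_bottoms \<rho> m = insert (a - 1) B"
    using assms(1) by (auto simp: pinned_class_def drop_class_def)
  have swap: "\<rho> a < a" "p \<le> \<rho> a" "a \<le> \<rho> p"
    using pin assms(2) a_range by (auto simp: up_crossings_def)
  show ?thesis
    using drop_tops_swap_remove[OF swap, of m] drop_bottoms_swap_remove[OF perm swap, of m]
      permutes_comp_transpose[OF perm] assms tops bots pin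
    by (simp add: drop_class_def up_crossings_def)
qed

lemma unswap_mem_pinned_class_up:
  assumes "\<sigma> \<in> drop_class m T B" "q \<in> {1..m}" "\<sigma> q = a - 1" "a \<notin> T" "a - 1 \<notin> B"
  shows "\<sigma> \<circ> transpose a q \<in> pinned_class T B \<and> q \<in> up_crossings (\<sigma> \<circ> transpose a q)"
proof -
  define \<rho> where "\<rho> = \<sigma> \<circ> transpose a q"
  have perm: "\<sigma> permutes {1..m}" and tops: "drop_tops \<sigma> m = T" and bots: "drop_bottoms \<sigma> m = B"
    using assms(1) by (auto simp: drop_class_def)
  have "q \<notin> drop_tops \<sigma> m"
  proof
    assume "q \<in> drop_tops \<sigma> m"
    then have "a - 1 \<in> B"
      unfolding bots[symmetric] drop_bottoms_eq_image assms(3)[symmetric] by (rule imageI)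
    then show False
      using assms(5) by simp
  qed
  moreover have "a \<notin> drop_tops \<sigma> m"
    using assms(4) tops by simp
  ultimately have swap: "\<rho> a < a" "q \<le> \<rho> a" "a \<le> \<rho> q"
    using assms(2,3) a_range by (auto simp: \<rho>_def drop_tops_iff)
  have pin: "\<rho> a = a - 1" and perm\<rho>: "\<rho> permutes {1..m}"
    using assms(3) permutes_comp_transpose[OF perm assms(2)] by (simp_all add: \<rho>_def)
  have top_a: "a \<in> drop_tops \<rho> m"
    using swap a_range by (auto simp: drop_tops_iff)
  then have bottom_a: "a - 1 \<in> drop_bottoms \<rho> m"
    unfolding drop_bottoms_eq_image pin[symmetric] by (rule imageI)
  have undo: "\<rho> \<circ> transpose a q = \<sigma>"
    by (simp add: \<rho>_def swap_swap_cancel)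
  have "T = drop_tops \<rho> m - {a}" "B = drop_bottoms \<rho> m - {a - 1}"
    using drop_tops_swap_remove[OF swap, of m] drop_bottoms_swap_remove[OF perm\<rho> swap, of m]
    by (simp_all only: undo tops bots pin)
  then have "drop_tops \<rho> m = insert a T" "drop_bottoms \<rho> m = insert (a - 1) B"
    using top_a bottom_a by blast+
  then show ?thesis
    using perm\<rho> pin swap assms(2) by (auto simp: pinned_class_def drop_class_def up_crossings_def \<rho>_def)
qed

lemma swap_down_crossing_mem_drop_class:
  assumes "\<rho> \<in> pinned_class T B" "t \<in> down_crossings \<rho>"
  shows "\<rho> \<circ> transpose a t \<in> drop_class m (insert a T) (insert (a - 1) B)"
proof -
  have perm: "\<rho> permutes {1..m}" and swap: "\<rho> a < a" "\<rho> t < a" "a \<le> t" "t \<le> m"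
    using assms a_range by (auto simp: pinned_class_def drop_class_def down_crossings_def)
  then show ?thesis
    using assms permutes_comp_transpose[OF perm]
    by (auto simp: drop_class_def pinned_class_def down_crossings_def
        drop_tops_swap_exchange[OF swap(1-3)] drop_bottoms_swap_exchange[OF swap])
qed

lemma unswap_mem_pinned_class_down:
  assumes "\<sigma> \<in> drop_class m (insert a T) (insert (a - 1) B)" "q \<in> {1..m}" "\<sigma> q = a - 1"
  shows "\<sigma> \<circ> transpose a q \<in> pinned_class T B \<and> q \<in> down_crossings (\<sigma> \<circ> transpose a q)"
proof -
  have perm: "\<sigma> permutes {1..m}" and tops: "drop_tops \<sigma> m = insert a T"
    and bots: "drop_bottoms \<sigma> m = insert (a - 1) B"
    using assms(1) by (auto simp: drop_class_def)
  have "a - 1 \<in> \<sigma> ` drop_tops \<sigma> m"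
    using bots by (simp add: drop_bottoms_eq_image)
  then have "q \<in> drop_tops \<sigma> m"
    using assms(3) permutes_inj[OF perm] by (auto dest: injD)
  moreover have "a \<in> drop_tops \<sigma> m"
    using tops by simp
  ultimately have swap: "\<sigma> a < a" "\<sigma> q < a" "a \<le> q" "q \<le> m"
    using assms(3) by (auto simp: drop_tops_iff)
  then show ?thesis
    using permutes_comp_transpose[OF perm assms(2)] tops bots assms(2,3)
    by (simp add: pinned_class_def drop_class_def down_crossings_def
        drop_tops_swap_exchange[OF swap(1-3)] drop_bottoms_swap_exchange[OF swap])
qed

lemma card_Sigma_pinned_class:
  assumes "\<And>\<rho>. C \<rho> \<subseteq> {1..m}"
    and "\<And>\<rho> p. \<rho> \<in> pinned_class T B \<Longrightarrow> p \<in> C \<rho> \<Longrightarrow> \<rho> \<circ> transpose a p \<in> drop_class m T' B'"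
    and "\<And>\<sigma> q. \<sigma> \<in> drop_class m T' B' \<Longrightarrow> q \<in> {1..m} \<Longrightarrow> \<sigma> q = a - 1 \<Longrightarrow>
           \<sigma> \<circ> transpose a q \<in> pinned_class T B \<and> q \<in> C (\<sigma> \<circ> transpose a q)"
  shows "card (SIGMA \<rho>:pinned_class T B. C \<rho>) = card (drop_class m T' B')"
proof -
  have left: "inv (\<rho> \<circ> transpose a p) (a - 1) = p" if "\<rho> \<in> pinned_class T B" "p \<in> C \<rho>" for \<rho> p
  proof -
    have "p \<in> {1..m}"
      using assms(1) that(2) by blast
    then have "\<rho> \<circ> transpose a p permutes {1..m}" "(\<rho> \<circ> transpose a p) p = a - 1"
      using that(1) permutes_comp_transpose by (auto simp: pinned_class_def drop_class_def)
    then show ?thesis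
      by (simp add: permutes_inv_eq)
  qed
  have position: "inv \<sigma> (a - 1) \<in> {1..m}" "\<sigma> (inv \<sigma> (a - 1)) = a - 1" if "\<sigma> permutes {1..m}" for \<sigma>
    using a_range permutes_in_image[OF permutes_inv[OF that]] permutes_inverses(1)[OF that] by auto
  have "bij_betw (\<lambda>(\<rho>, p). \<rho> \<circ> transpose a p) (SIGMA \<rho>:pinned_class T B. C \<rho>) (drop_class m T' B')"
  proof (rule bij_betw_byWitness[where f' = "\<lambda>\<sigma>. (\<sigma> \<circ> transpose a (inv \<sigma> (a - 1)), inv \<sigma> (a - 1))"])
    show "(\<lambda>\<sigma>. (\<sigma> \<circ> transpose a (inv \<sigma> (a - 1)), inv \<sigma> (a - 1))) ` drop_class m T' B'
        \<subseteq> (SIGMA \<rho>:pinned_class T B. C \<rho>)"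
      using assms(3) position by (auto simp: drop_class_def)
  qed (use assms(2) left in \<open>auto simp: swap_swap_cancel\<close>)
  then show ?thesis
    by (rule bij_betw_same_card)
qed

lemma card_drop_class_insert:
  assumes "a \<notin> T" "a - 1 \<notin> B"
  shows "card (drop_class m (insert a T) (insert (a - 1) B)) = card (drop_class m T B)"
proof -
  have "card (drop_class m T B) = card (SIGMA \<rho>:pinned_class T B. up_crossings \<rho>)"
    using assms
    by (intro card_Sigma_pinned_class[symmetric] swap_up_crossing_mem_drop_class
        unswap_mem_pinned_class_up) (auto simp: up_crossings_def)
  also have "\<dots> = (\<Sum>\<rho>\<in>pinned_class T B. card (up_crossings \<rho>))"
    using finite_drop_class by (simp add: pinned_class_def up_crossings_def)
  also have "\<dots> = (\<Sum>\<rho>\<in>pinned_class T B. card (down_crossings \<rho>))"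
    by (intro sum.cong refl card_up_crossings_eq_card_down_crossings)
      (simp add: pinned_class_def drop_class_def)
  also have "\<dots> = card (SIGMA \<rho>:pinned_class T B. down_crossings \<rho>)"
    using finite_drop_class by (simp add: pinned_class_def down_crossings_def)
  also have "\<dots> = card (drop_class m (insert a T) (insert (a - 1) B))"
    by (intro card_Sigma_pinned_class swap_down_crossing_mem_drop_class
        unswap_mem_pinned_class_down) (auto simp: down_crossings_def)
  finally show ?thesis
    by simp
qed

end

definition top_indices :: "nat \<Rightarrow> (nat \<Rightarrow> nat) \<Rightarrow> nat set" where
  "top_indices n \<sigma> = {k \<in> {1..n}. 2 * k \<in> drop_tops \<sigma> (2 * n)}"

definition bottom_indices :: "nat \<Rightarrow> (nat \<Rightarrow> nat) \<Rightarrow> nat set" where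
  "bottom_indices n \<sigma> = {k \<in> {1..n}. 2 * k - 1 \<in> drop_bottoms \<sigma> (2 * n)}"

definition index_class :: "nat \<Rightarrow> nat set \<Rightarrow> nat set \<Rightarrow> (nat \<Rightarrow> nat) set" where
  "index_class n X Y = drop_class (2 * n) ((\<lambda>k. 2 * k) ` X) ((\<lambda>k. 2 * k - 1) ` Y)"

lemma inj_odd_index: "inj (\<lambda>k::nat. 2 * k - 1)"
  by (rule injI) simp

lemma R_iff_parity:
  "\<sigma> \<in> R n \<longleftrightarrow> \<sigma> permutes {1..2 * n} \<and>
     (\<forall>i \<in> drop_tops \<sigma> (2 * n). even i) \<and> (\<forall>j \<in> drop_bottoms \<sigma> (2 * n). odd j)"
  by (auto simp: R_def drop_tops_def drop_bottoms_eq_image)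

lemma R_drop_tops_eq:
  assumes "\<sigma> \<in> R n"
  shows "drop_tops \<sigma> (2 * n) = (\<lambda>k. 2 * k) ` top_indices n \<sigma>"
proof (intro equalityI subsetI)
  fix i assume i: "i \<in> drop_tops \<sigma> (2 * n)"
  then obtain k where "i = 2 * k"
    using assms by (auto simp: R_iff_parity elim!: evenE)
  with i show "i \<in> (\<lambda>k. 2 * k) ` top_indices n \<sigma>"
    by (auto simp: top_indices_def drop_tops_iff)
qed (auto simp: top_indices_def)

lemma R_drop_bottoms_eq:
  assumes "\<sigma> \<in> R n"
  shows "drop_bottoms \<sigma> (2 * n) = (\<lambda>k. 2 * k - 1) ` bottom_indices n \<sigma>"
proof (intro equalityI subsetI)
  fix j assume j: "j \<in> drop_bottoms \<sigma> (2 * n)"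
  have perm: "\<sigma> permutes {1..2 * n}"
    using assms by (simp add: R_def)
  obtain i where "i \<in> {1..2 * n}" "j = \<sigma> i"
    using j by (auto simp: drop_bottoms_def)
  then have "j \<in> {1..2 * n}"
    using permutes_in_image[OF perm] by simp
  moreover obtain k where "j = 2 * k + 1"
    using assms j by (auto simp: R_iff_parity elim!: oddE)
  ultimately show "j \<in> (\<lambda>k. 2 * k - 1) ` bottom_indices n \<sigma>"
    using j by (intro image_eqI[where x = "k + 1"]) (auto simp: bottom_indices_def)
qed (auto simp: bottom_indices_def)

lemma R_fibre_eq_index_class:
  assumes "X \<subseteq> {1..n}" "Y \<subseteq> {1..n}"
  shows "{\<sigma> \<in> R n. top_indices n \<sigma> = X \<and> bottom_indices n \<sigma> = Y} = index_class n X Y"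
proof (intro equalityI subsetI)
  fix \<sigma> assume "\<sigma> \<in> {\<sigma> \<in> R n. top_indices n \<sigma> = X \<and> bottom_indices n \<sigma> = Y}"
  then show "\<sigma> \<in> index_class n X Y"
    using R_drop_tops_eq R_drop_bottoms_eq
    by (auto simp: index_class_def drop_class_def R_def)
next
  fix \<sigma> assume "\<sigma> \<in> index_class n X Y"
  then have perm: "\<sigma> permutes {1..2 * n}"
    and tops: "drop_tops \<sigma> (2 * n) = (\<lambda>k. 2 * k) ` X"
    and bots: "drop_bottoms \<sigma> (2 * n) = (\<lambda>k. 2 * k - 1) ` Y"
    by (auto simp: index_class_def drop_class_def)
  have "\<sigma> \<in> R n"
    using assms(2) perm tops bots by (auto simp: R_iff_parity)
  moreover have "top_indices n \<sigma> = X"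
    using assms(1) tops by (auto simp: top_indices_def)
  moreover have "2 * k - 1 \<in> (\<lambda>k. 2 * k - 1) ` Y \<longleftrightarrow> k \<in> Y" for k
    by (rule inj_image_mem_iff[OF inj_odd_index])
  then have "bottom_indices n \<sigma> = Y"
    using assms(2) bots by (auto simp: bottom_indices_def)
  ultimately show "\<sigma> \<in> {\<sigma> \<in> R n. top_indices n \<sigma> = X \<and> bottom_indices n \<sigma> = Y}"
    by simp
qed

lemma R_card_indices:
  assumes "\<sigma> \<in> R n"
  shows "card (top_indices n \<sigma>) = dropnum \<sigma> (2 * n)"
    and "card (bottom_indices n \<sigma>) = dropnum \<sigma> (2 * n)"
proof -
  have perm: "\<sigma> permutes {1..2 * n}"
    using assms by (simp add: R_def)
  show "card (top_indices n \<sigma>) = dropnum \<sigma> (2 * n)"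
    by (simp add: dropnum_eq_card_drop_tops R_drop_tops_eq[OF assms] card_image inj_on_def)
  then show "card (bottom_indices n \<sigma>) = dropnum \<sigma> (2 * n)"
    using card_drop_bottoms[OF perm, of "2 * n"] inj_odd_index
    by (simp add: dropnum_eq_card_drop_tops R_drop_bottoms_eq[OF assms] card_image inj_on_subset)
qed

lemma primary_iff_disjoint_indices:
  "primary n \<sigma> \<longleftrightarrow> \<sigma> \<in> R n \<and> top_indices n \<sigma> \<inter> bottom_indices n \<sigma> = {}"
proof (cases "\<sigma> \<in> R n")
  case True
  have "(\<forall>t \<in> drop_tops \<sigma> (2 * n). \<forall>b \<in> drop_bottoms \<sigma> (2 * n). t > b \<longrightarrow> t - b \<ge> 3)
      \<longleftrightarrow> (\<forall>k \<in> top_indices n \<sigma>. \<forall>l \<in> bottom_indices n \<sigma>. 2 * k > 2 * l - 1 \<longrightarrow> 2 * k - (2 * l - 1) \<ge> 3)"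
    by (simp add: R_drop_tops_eq[OF True] R_drop_bottoms_eq[OF True])
  also have "\<dots> \<longleftrightarrow> top_indices n \<sigma> \<inter> bottom_indices n \<sigma> = {}"
  proof
    assume H: "\<forall>k \<in> top_indices n \<sigma>. \<forall>l \<in> bottom_indices n \<sigma>. 2 * k > 2 * l - 1 \<longrightarrow> 2 * k - (2 * l - 1) \<ge> 3"
    show "top_indices n \<sigma> \<inter> bottom_indices n \<sigma> = {}"
    proof (rule equals0I)
      fix k assume k: "k \<in> top_indices n \<sigma> \<inter> bottom_indices n \<sigma>"
      then have "2 * k > 2 * k - 1 \<longrightarrow> 2 * k - (2 * k - 1) \<ge> 3"
        using H by blast
      moreover have "k \<ge> 1"
        using k by (simp add: bottom_indices_def)
      ultimately show False
        by arith
    qed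
  next
    assume disj: "top_indices n \<sigma> \<inter> bottom_indices n \<sigma> = {}"
    show "\<forall>k \<in> top_indices n \<sigma>. \<forall>l \<in> bottom_indices n \<sigma>. 2 * k > 2 * l - 1 \<longrightarrow> 2 * k - (2 * l - 1) \<ge> 3"
    proof (intro ballI impI)
      fix k l assume k: "k \<in> top_indices n \<sigma>" and l: "l \<in> bottom_indices n \<sigma>" and "2 * k > 2 * l - 1"
      moreover have "l \<ge> 1" "k \<noteq> l"
        using k l disj by (auto simp: bottom_indices_def)
      ultimately show "2 * k - (2 * l - 1) \<ge> 3"
        by arith
    qed
  qed
  finally show ?thesis
    using True by (simp add: primary_def)
qed (simp add: primary_def)

lemma card_index_class_union:
  assumes "Z \<subseteq> {1..n}" "X \<inter> Z = {}" "Y \<inter> Z = {}"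
  shows "card (index_class n (X \<union> Z) (Y \<union> Z)) = card (index_class n X Y)"
proof -
  have "finite Z"
    using assms(1) finite_subset by blast
  then show ?thesis
    using assms
  proof (induction Z rule: finite_induct)
    case (insert z Z)
    have "2 * z \<in> {2..2 * n}" "2 * z \<notin> (\<lambda>k. 2 * k) ` (X \<union> Z)"
      using insert by auto
    moreover have "2 * z - 1 \<notin> (\<lambda>k. 2 * k - 1) ` (Y \<union> Z)"
      using insert inj_image_mem_iff[OF inj_odd_index, of z "Y \<union> Z"] by auto
    ultimately have "card (index_class n (insert z (X \<union> Z)) (insert z (Y \<union> Z)))
        = card (index_class n (X \<union> Z) (Y \<union> Z))"
      unfolding index_class_def image_insert by (rule card_drop_class_insert)
    then show ?case
      using insert by simp
  qed simp
qed

lemma sum_index_classes_collapse: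
  fixes x :: "'a::comm_semiring_1"
  shows "(\<Sum>(X, Y)\<in>Pow {1..n} \<times> Pow {1..n}. of_nat (card (index_class n X Y)) * x ^ card X) =
    (\<Sum>(X, Y)\<in>{(X, Y)\<in>Pow {1..n} \<times> Pow {1..n}. X \<inter> Y = {}}.
       of_nat (card (index_class n X Y)) * x ^ card X * (1 + x) ^ card ({1..n} - X - Y))"
  unfolding sum_Pow_pairs_by_intersection[OF finite_atLeastAtMost]
proof (rule sum.cong[OF refl], clarify)
  fix X Y assume XY: "X \<subseteq> {1..n}" "Y \<subseteq> {1..n}" "X \<inter> Y = {}"
  have "(\<Sum>Z\<in>Pow ({1..n} - X - Y). of_nat (card (index_class n (X \<union> Z) (Y \<union> Z))) * x ^ card (X \<union> Z))
      = (\<Sum>Z\<in>Pow ({1..n} - X - Y). of_nat (card (index_class n X Y)) * x ^ card X * x ^ card Z)"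
  proof (rule sum.cong[OF refl])
    fix Z assume Z: "Z \<in> Pow ({1..n} - X - Y)"
    then have "card (X \<union> Z) = card X + card Z"
      using XY by (intro card_Un_disjoint) (auto intro: finite_subset)
    moreover have "card (index_class n (X \<union> Z) (Y \<union> Z)) = card (index_class n X Y)"
      using Z by (intro card_index_class_union) auto
    ultimately show "of_nat (card (index_class n (X \<union> Z) (Y \<union> Z))) * x ^ card (X \<union> Z)
        = of_nat (card (index_class n X Y)) * x ^ card X * x ^ card Z"
      by (simp add: power_add mult.assoc)
  qed
  also have "\<dots> = of_nat (card (index_class n X Y)) * x ^ card X * (1 + x) ^ card ({1..n} - X - Y)"
    by (simp add: sum_distrib_left[symmetric] sum_Pow_power_card)
  finally show "(\<Sum>Z\<in>Pow ({1..n} - X - Y). of_nat (card (index_class n (X \<union> Z) (Y \<union> Z))) * x ^ card (X \<union> Z))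
      = of_nat (card (index_class n X Y)) * x ^ card X * (1 + x) ^ card ({1..n} - X - Y)" .
qed

lemma finite_R: "finite (R n)"
  by (rule finite_subset[OF _ finite_permutations[of "{1..2 * n}"]]) (auto simp: R_def)

lemma sum_R_by_index_classes:
  assumes "Q \<subseteq> Pow {1..n} \<times> Pow {1..n}"
  shows "(\<Sum>\<sigma> \<in> {\<sigma> \<in> R n. (top_indices n \<sigma>, bottom_indices n \<sigma>) \<in> Q}.
           g (top_indices n \<sigma>) (bottom_indices n \<sigma>))
       = (\<Sum>(X, Y)\<in>Q. of_nat (card (index_class n X Y)) * g X Y)"
proof -
  let ?key = "\<lambda>\<sigma>. (top_indices n \<sigma>, bottom_indices n \<sigma>)"
  let ?A = "{\<sigma> \<in> R n. ?key \<sigma> \<in> Q}"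
  have fibre: "{\<sigma> \<in> ?A. ?key \<sigma> = q} = index_class n (fst q) (snd q)" if "q \<in> Q" for q
  proof -
    have "{\<sigma> \<in> ?A. ?key \<sigma> = q} = {\<sigma> \<in> R n. top_indices n \<sigma> = fst q \<and> bottom_indices n \<sigma> = snd q}"
      using that by auto
    also have "\<dots> = index_class n (fst q) (snd q)"
      using subsetD[OF assms that] by (intro R_fibre_eq_index_class) (auto simp: mem_Times_iff)
    finally show ?thesis .
  qed
  have "finite Q"
    using assms by (rule finite_subset) auto
  then have "(\<Sum>\<sigma>\<in>?A. g (top_indices n \<sigma>) (bottom_indices n \<sigma>))
      = (\<Sum>q\<in>Q. of_nat (card {\<sigma> \<in> ?A. ?key \<sigma> = q}) * case_prod g q)"
    using sum_by_fibres[of ?A Q ?key "case_prod g"] finite_R by auto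
  also have "\<dots> = (\<Sum>(X, Y)\<in>Q. of_nat (card (index_class n X Y)) * g X Y)"
  proof (rule sum.cong[OF refl])
    fix q assume "q \<in> Q"
    then show "of_nat (card {\<sigma> \<in> ?A. ?key \<sigma> = q}) * case_prod g q
        = (case q of (X, Y) \<Rightarrow> of_nat (card (index_class n X Y)) * g X Y)"
      by (simp only: fibre) (simp add: case_prod_unfold)
  qed
  finally show ?thesis .
qed

lemma primary_card_indices:
  assumes "primary n \<sigma>"
  shows "2 * dropnum \<sigma> (2 * n) \<le> n"
    and "card ({1..n} - top_indices n \<sigma> - bottom_indices n \<sigma>) = n - 2 * dropnum \<sigma> (2 * n)"
proof -
  have R: "\<sigma> \<in> R n" and disj: "top_indices n \<sigma> \<inter> bottom_indices n \<sigma> = {}"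
    using assms by (auto simp: primary_iff_disjoint_indices)
  have sub: "top_indices n \<sigma> \<union> bottom_indices n \<sigma> \<subseteq> {1..n}"
    by (auto simp: top_indices_def bottom_indices_def)
  then have "card (top_indices n \<sigma> \<union> bottom_indices n \<sigma>) = 2 * dropnum \<sigma> (2 * n)"
    using disj R_card_indices[OF R] by (subst card_Un_disjoint) (auto intro: finite_subset)
  moreover have "card (top_indices n \<sigma> \<union> bottom_indices n \<sigma>) \<le> n"
    using card_mono[OF _ sub] by simp
  moreover have "{1..n} - top_indices n \<sigma> - bottom_indices n \<sigma> = {1..n} - (top_indices n \<sigma> \<union> bottom_indices n \<sigma>)"
    by blast
  ultimately show "2 * dropnum \<sigma> (2 * n) \<le> n"
    and "card ({1..n} - top_indices n \<sigma> - bottom_indices n \<sigma>) = n - 2 * dropnum \<sigma> (2 * n)"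
    using card_Diff_subset[OF finite_subset[OF sub finite_atLeastAtMost] sub] by simp_all
qed

lemma sum_primary_by_dropnum:
  "(\<Sum>\<sigma> | primary n \<sigma>. f (dropnum \<sigma> (2 * n))) = (\<Sum>j = 0..n div 2. of_nat (gamma n j) * f j)"
proof -
  have "finite {\<sigma>. primary n \<sigma>}"
    by (rule finite_subset[OF _ finite_R]) (auto simp: primary_def)
  moreover have "(\<lambda>\<sigma>. dropnum \<sigma> (2 * n)) ` {\<sigma>. primary n \<sigma>} \<subseteq> {0..n div 2}"
    using primary_card_indices(1) by fastforce
  ultimately show ?thesis
    using sum_by_fibres[of "{\<sigma>. primary n \<sigma>}" "{0..n div 2}" "\<lambda>\<sigma>. dropnum \<sigma> (2 * n)" f]
    by (simp add: gamma_def)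
qed

lemma sum_R_eq_sum_index_classes:
  fixes x :: "'a::comm_semiring_1"
  shows "(\<Sum>\<sigma>\<in>R n. x ^ dropnum \<sigma> (2 * n))
       = (\<Sum>(X, Y)\<in>Pow {1..n} \<times> Pow {1..n}. of_nat (card (index_class n X Y)) * x ^ card X)"
proof -
  have "{\<sigma> \<in> R n. (top_indices n \<sigma>, bottom_indices n \<sigma>) \<in> Pow {1..n} \<times> Pow {1..n}} = R n"
    by (auto simp: top_indices_def bottom_indices_def)
  then show ?thesis
    using sum_R_by_index_classes[of "Pow {1..n} \<times> Pow {1..n}" n "\<lambda>X Y. x ^ card X"]
    by (simp add: R_card_indices)
qed

lemma sum_primary_eq_sum_disjoint_index_classes:
  fixes x :: "'a::comm_semiring_1"
  shows "(\<Sum>\<sigma> | primary n \<sigma>. x ^ dropnum \<sigma> (2 * n) * (1 + x) ^ (n - 2 * dropnum \<sigma> (2 * n)))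
       = (\<Sum>(X, Y)\<in>{(X, Y)\<in>Pow {1..n} \<times> Pow {1..n}. X \<inter> Y = {}}.
            of_nat (card (index_class n X Y)) * x ^ card X * (1 + x) ^ card ({1..n} - X - Y))"
proof -
  let ?D = "{(X, Y)\<in>Pow {1..n} \<times> Pow {1..n}. X \<inter> Y = {}}"
  have "{\<sigma> \<in> R n. (top_indices n \<sigma>, bottom_indices n \<sigma>) \<in> ?D} = {\<sigma>. primary n \<sigma>}"
    by (auto simp: primary_iff_disjoint_indices top_indices_def bottom_indices_def)
  moreover have "x ^ dropnum \<sigma> (2 * n) * (1 + x) ^ (n - 2 * dropnum \<sigma> (2 * n))
      = x ^ card (top_indices n \<sigma>) * (1 + x) ^ card ({1..n} - top_indices n \<sigma> - bottom_indices n \<sigma>)"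
    if "primary n \<sigma>" for \<sigma>
    using that primary_card_indices(2) R_card_indices(1) by (simp add: primary_def)
  ultimately show ?thesis
    using sum_R_by_index_classes[of ?D n "\<lambda>X Y. x ^ card X * (1 + x) ^ card ({1..n} - X - Y)"]
    by (auto simp: mult.assoc intro: sum.cong)
qed

theorem R_drop_generating_function:
  fixes x :: "'a::comm_semiring_1"
  shows "(\<Sum>\<sigma>\<in>R n. x ^ dropnum \<sigma> (2 * n))
       = (\<Sum>j = 0..n div 2. of_nat (gamma n j) * x ^ j * (1 + x) ^ (n - 2 * j))"
  using sum_R_eq_sum_index_classes[of x n] sum_index_classes_collapse[of n x]
    sum_primary_eq_sum_disjoint_index_classes[of x n]
    sum_primary_by_dropnum[where f = "\<lambda>j. x ^ j * (1 + x) ^ (n - 2 * j)"]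
  by (simp add: mult.assoc)

theorem mainTheorem6:
  fixes n :: nat
  assumes "n \<ge> 1"
  shows "(\<Sum>\<sigma>\<in>R n. [:0, 1:] ^ dropnum \<sigma> (2*n)) =
         (\<Sum>j = 0..n div 2. of_nat (gamma n j) * [:0, 1:] ^ j * [:1, 1:] ^ (n - 2*j) :: int poly)"
proof -
  (* the identity holds for n = 0 as well *)
  have "1 + [:0, 1:] = ([:1, 1:] :: int poly)"
    by (simp add: one_pCons)
  then show ?thesis
    using R_drop_generating_function[where x = "[:0, 1:] :: int poly"] by simp
qed

end
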